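(* Let $A<\mathbb{R}$ be any subring. For any finite set $S\subseteq H(A)''$ there is a non-trivial element $h_S\in H(A)$ commuting with each element of $S$.
   Context: Let $\mathbb{P}^1=\mathbb{P}^1(\mathbb{R})$ with its usual topology (a circle) and the natural action of $\mathrm{PSL}_2(\mathbb{R})$. Let $G$ be the group of homeomorphisms of $\mathbb{P}^1$ which are piecewise in $\mathrm{PSL}_2(\mathbb{R})$ with finitely many pieces, each an interval. Let $\infty\in\mathbb{P}^1$ correspond to the first basis vector of $\mathbb{R}^2$ and $H<G$ its stabilizer. For a subring $A<\mathbb{R}$, $P_A$ is the set of fixed points of hyperbolic elements of $\mathrm{PSL}_2(A)$, $G(A)$ is the subgroup of $G$ of elements piecewise in $\mathrm{PSL}_2(A)$ with all interval endpoints in $P_A$, and $H(A)=G(A)\cap H$. $H(A)''$ denotes the second derived subgroup $[H(A)',H(A)']$, where $H(A)'=[H(A),H(A)]$. *)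

theory Defs
  imports "HOL-Analysis.Analysis" "HOL-Algebra.Solvable_Groups" "HOL-Algebra.Bij"
begin

text \<open>The real projective line P^1(R) is modelled as real option:
  Some t is the point [t:1] and None is the point [1:0] = infinity
  (the line spanned by the first basis vector).\<close>

type_synonym p1 = "real option"

definition P1_open :: "p1 set \<Rightarrow> bool" where
  "P1_open U \<longleftrightarrow> open {t. Some t \<in> U} \<and>
     (None \<in> U \<longrightarrow> (\<exists>M. \<forall>t. \<bar>t\<bar> > M \<longrightarrow> Some t \<in> U))"

definition P1_top :: "p1 topology" where
  "P1_top = topology P1_open"

text \<open>2x2 real matrices (a b; c d) as quadruples.\<close>
type_synonym mat2 = "real \<times> real \<times> real \<times> real"

definition SL2 :: "real set \<Rightarrow> mat2 set" where
  "SL2 A = {(a,b,c,d). a \<in> A \<and> b \<in> A \<and> c \<in> A \<and> d \<in> A \<and> a*d - b*c = 1}"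

text \<open>Natural (projective) action of a matrix on P^1: [x:y] maps to [ax+by : cx+dy].
  It only depends on the class in PSL2.\<close>
fun mobius :: "mat2 \<Rightarrow> p1 \<Rightarrow> p1" where
  "mobius (a,b,c,d) (Some t) = (if c*t + d \<noteq> 0 then Some ((a*t + b)/(c*t + d)) else None)"
| "mobius (a,b,c,d) None = (if c \<noteq> 0 then Some (a/c) else None)"

definition is_subring :: "real set \<Rightarrow> bool" where
  "is_subring A \<longleftrightarrow> 1 \<in> A \<and> (\<forall>x\<in>A. \<forall>y\<in>A. x - y \<in> A \<and> x * y \<in> A)"

definition hyperbolic :: "mat2 \<Rightarrow> bool" where
  "hyperbolic M \<longleftrightarrow> (case M of (a,b,c,d) \<Rightarrow> \<bar>a + d\<bar> > 2)"

definition P_set :: "real set \<Rightarrow> p1 set" where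
  "P_set A = {p. \<exists>M\<in>SL2 A. hyperbolic M \<and> mobius M p = p}"

text \<open>G(A): homeomorphisms of P^1 which are piecewise in PSL2(A), with finitely
  many pieces; the pieces are the intervals (connected components) of the
  complement of a finite set of breakpoints lying in P_A.\<close>
definition G_A :: "real set \<Rightarrow> (p1 \<Rightarrow> p1) set" where
  "G_A A = {g. homeomorphic_map P1_top P1_top g \<and>
     (\<exists>B. finite B \<and> B \<subseteq> P_set A \<and>
        (\<forall>C \<in> connected_components_of (subtopology P1_top (UNIV - B)).
           \<exists>M \<in> SL2 A. \<forall>p\<in>C. g p = mobius M p))}"

definition H_A :: "real set \<Rightarrow> (p1 \<Rightarrow> p1) set" where
  "H_A A = {g \<in> G_A A. g None = None}"

abbreviation Sym_P1 :: "(p1 \<Rightarrow> p1) monoid" where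
  "Sym_P1 \<equiv> BijGroup (UNIV :: p1 set)"

definition H_A_dd :: "real set \<Rightarrow> (p1 \<Rightarrow> p1) set" where
  "H_A_dd A = derived Sym_P1 (derived Sym_P1 (H_A A))"

end

theory Submission
  imports Defs "HOL-Real_Asymp.Real_Asymp"
begin

text \<open>Near \<open>+\<infinity>\<close> an element of \<open>H(A)\<close> is a single projective piece fixing \<open>\<infinity>\<close>,
  hence an affine map \<open>x \<mapsto> \<alpha> x + \<beta>\<close> with \<open>\<alpha> > 0\<close>. Passing to these germs is a
  homomorphism to the affine group of the line, whose commutators are translations and whose
  second derived subgroup is trivial; so every element of \<open>H(A)''\<close> is the identity on a ray
  \<open>[M, \<infinity>)\<close>. A finite \<open>S\<close> fixes a common ray pointwise, and a non-trivial element of \<open>H(A)\<close>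
  supported inside that ray commutes with all of \<open>S\<close>. Such an element is the hyperbolic map
  \<open>x \<mapsto> (2x + 1)/(x + 1)\<close>, conjugated by an integer translation, between its two fixed points
  and the identity elsewhere.\<close>

section \<open>The topology of the projective line\<close>

lemma istopology_P1_open: "istopology P1_open"
  unfolding istopology_def
proof (intro conjI allI impI)
  fix S T :: "p1 set" assume S: "P1_open S" and T: "P1_open T"
  have "open {t. Some t \<in> S \<inter> T}"
    using S T unfolding P1_open_def by (simp add: Collect_conj_eq open_Int)
  moreover have "\<exists>M. \<forall>t. \<bar>t\<bar> > M \<longrightarrow> Some t \<in> S \<inter> T" if "None \<in> S \<inter> T"
  proof -
    obtain M1 M2 where "\<forall>t. \<bar>t\<bar> > M1 \<longrightarrow> Some t \<in> S" "\<forall>t. \<bar>t\<bar> > M2 \<longrightarrow> Some t \<in> T"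
      using S T \<open>None \<in> S \<inter> T\<close> unfolding P1_open_def by blast
    then show ?thesis by (intro exI[of _ "max M1 M2"]) auto
  qed
  ultimately show "P1_open (S \<inter> T)" unfolding P1_open_def by blast
next
  fix K :: "p1 set set" assume K: "\<forall>S\<in>K. P1_open S"
  have "{t. Some t \<in> \<Union>K} = (\<Union>S\<in>K. {t. Some t \<in> S})" by auto
  then have "open {t. Some t \<in> \<Union>K}" using K unfolding P1_open_def by (auto intro!: open_UN)
  moreover have "\<exists>M. \<forall>t. \<bar>t\<bar> > M \<longrightarrow> Some t \<in> \<Union>K" if "None \<in> \<Union>K"
    using that K unfolding P1_open_def by blast
  ultimately show "P1_open (\<Union>K)" unfolding P1_open_def by blast
qed

lemma openin_P1_top: "openin P1_top = P1_open"
  unfolding P1_top_def using istopology_P1_open by simp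

lemma topspace_P1_top: "topspace P1_top = UNIV"
proof -
  have "P1_open UNIV" unfolding P1_open_def by auto
  then show ?thesis unfolding topspace_def openin_P1_top by auto
qed

lemma continuous_map_Some: "continuous_map euclideanreal P1_top Some"
  unfolding continuous_map openin_P1_top topspace_P1_top by (auto simp: P1_open_def)

lemma continuous_map_P1_top_at_infinity:
  assumes "continuous_map P1_top P1_top g" "g None = None"
  shows "\<forall>\<^sub>F t in at_top. \<forall>s. g (Some t) = Some s \<longrightarrow> K < \<bar>s\<bar>"
proof -
  define U where "U = {p. \<forall>s. p = Some s \<longrightarrow> K < \<bar>s\<bar>}"
  have "{t. Some t \<in> U} = {t. K < \<bar>t\<bar>}" unfolding U_def by auto
  moreover have "open {t::real. K < \<bar>t\<bar>}" by (intro open_Collect_less continuous_intros)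
  ultimately have "P1_open U" unfolding P1_open_def U_def by auto
  then have "P1_open {p. g p \<in> U}"
    using assms(1) unfolding continuous_map openin_P1_top topspace_P1_top by auto
  moreover have "None \<in> {p. g p \<in> U}" using assms(2) U_def by auto
  ultimately obtain M where M: "\<forall>t. \<bar>t\<bar> > M \<longrightarrow> g (Some t) \<in> U" unfolding P1_open_def by auto
  have "\<forall>\<^sub>F t in at_top. g (Some t) \<in> U"
    using eventually_gt_at_top[of M] by eventually_elim (use M in auto)
  then show ?thesis unfolding U_def by simp
qed

lemma connectedin_P1_top_avoiding:
  assumes "connectedin P1_top C" "Some p \<notin> C" "Some q \<notin> C"
  shows "C \<subseteq> Some ` {p<..<q} \<or> C \<inter> Some ` {p<..<q} = {}"
proof -
  let ?I = "Some ` {p<..<q}" and ?J = "- Some ` {p..q}"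
  have "{t. Some t \<in> ?I} = {p<..<q}" "{t. Some t \<in> ?J} = - {p..q}" by auto
  moreover have "\<forall>t. \<bar>t\<bar> > \<bar>p\<bar> + \<bar>q\<bar> \<longrightarrow> Some t \<in> ?J" by auto
  ultimately have "openin P1_top ?I" "openin P1_top ?J"
    unfolding openin_P1_top P1_open_def by (auto simp: open_Compl)
  moreover have "disjnt ?I ?J" by (auto simp: disjnt_def)
  ultimately have "separatedin P1_top ?I ?J"
    by (simp add: separatedin_open_sets)
  moreover have "C \<subseteq> ?I \<union> ?J"
  proof
    fix x assume "x \<in> C"
    with assms(2,3) have "x \<noteq> Some p" "x \<noteq> Some q" by auto
    then show "x \<in> ?I \<union> ?J" by (cases x) auto
  qed
  ultimately have "C \<subseteq> ?I \<or> C \<subseteq> ?J"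
    using connectedin_subset_separated_union[OF assms(1)] by blast
  then show ?thesis by auto
qed

lemma continuous_map_map_option:
  assumes "continuous_on UNIV F" and id_out: "\<And>u. R < \<bar>u\<bar> \<Longrightarrow> F u = u"
  shows "continuous_map P1_top P1_top (map_option F)"
  unfolding continuous_map openin_P1_top topspace_P1_top
proof (intro conjI allI impI)
  fix U assume U: "P1_open U"
  let ?V = "{p \<in> UNIV. map_option F p \<in> U}"
  have "open (F -` {s. Some s \<in> U})"
    using U assms(1) unfolding P1_open_def by (blast intro: open_vimage)
  moreover have "{t. Some t \<in> ?V} = F -` {s. Some s \<in> U}" by auto
  moreover have "\<exists>M. \<forall>t. \<bar>t\<bar> > M \<longrightarrow> Some t \<in> ?V" if "None \<in> ?V"
  proof -
    have "None \<in> U" using that by simp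
    then obtain M where "\<forall>t. \<bar>t\<bar> > M \<longrightarrow> Some t \<in> U"
      using U unfolding P1_open_def by blast
    then show ?thesis
      using id_out by (intro exI[of _ "max M R"]) auto
  qed
  ultimately show "P1_open ?V" unfolding P1_open_def by simp
qed simp

lemma homeomorphic_map_map_option:
  assumes "continuous_on UNIV F" "\<And>u. R < \<bar>u\<bar> \<Longrightarrow> F u = u"
    and "continuous_on UNIV G" "\<And>u. R < \<bar>u\<bar> \<Longrightarrow> G u = u"
    and "\<And>u. G (F u) = u" "\<And>u. F (G u) = u"
  shows "homeomorphic_map P1_top P1_top (map_option F)"
  unfolding homeomorphic_map_maps homeomorphic_maps_def
  using assms continuous_map_map_option[of F R] continuous_map_map_option[of G R]
  by (intro exI[of _ "map_option G"]) (simp add: option.map_comp comp_def option.map_ident)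

section \<open>Affine germs at \<open>+\<infinity>\<close>\<close>

definition affine_near_top :: "(p1 \<Rightarrow> p1) \<Rightarrow> real \<Rightarrow> real \<Rightarrow> bool" where
  "affine_near_top f a b \<longleftrightarrow> (\<forall>\<^sub>F x in at_top. f (Some x) = Some (a * x + b))"

lemma affine_near_top_id: "affine_near_top id 1 0"
  by (simp add: affine_near_top_def)

lemma affine_near_top_comp:
  assumes f: "affine_near_top f a b" and g: "affine_near_top g c d" and "c > 0"
  shows "affine_near_top (f \<circ> g) (a * c) (a * d + b)"
proof -
  have "filterlim (\<lambda>x. c * x + d) at_top at_top"
    using \<open>c > 0\<close> by real_asymp
  with f have "\<forall>\<^sub>F x in at_top. f (Some (c * x + d)) = Some (a * (c * x + d) + b)"
    unfolding affine_near_top_def by (rule eventually_compose_filterlim)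
  with g show ?thesis
    unfolding affine_near_top_def by eventually_elim (simp add: algebra_simps)
qed

lemma affine_near_top_cancel:
  assumes "u \<circ> f = g" and f: "affine_near_top f a b" and g: "affine_near_top g c d" and "a > 0"
  shows "affine_near_top u (c / a) (d - c * b / a)"
proof -
  have lim: "filterlim (\<lambda>y. (y - b) / a) at_top at_top"
    using \<open>a > 0\<close> by real_asymp
  have "\<forall>\<^sub>F x in at_top. u (Some (a * x + b)) = Some (c * x + d)"
    using f g unfolding affine_near_top_def
    by eventually_elim (metis \<open>u \<circ> f = g\<close> comp_apply)
  then have "\<forall>\<^sub>F y in at_top. u (Some (a * ((y - b) / a) + b)) = Some (c * ((y - b) / a) + d)"
    using lim by (rule eventually_compose_filterlim)
  then show ?thesis
    unfolding affine_near_top_def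
    by eventually_elim (use \<open>a > 0\<close> in \<open>simp add: field_simps\<close>)
qed

lemma carrier_Sym_P1: "carrier Sym_P1 = {f. bij f}"
  by (auto simp: BijGroup_def Bij_def)

lemma mult_Sym_P1: "f \<in> carrier Sym_P1 \<Longrightarrow> g \<in> carrier Sym_P1 \<Longrightarrow> f \<otimes>\<^bsub>Sym_P1\<^esub> g = f \<circ> g"
  by (auto simp: BijGroup_def compose_def fun_eq_iff)

lemma one_Sym_P1: "\<one>\<^bsub>Sym_P1\<^esub> = id"
  by (auto simp: BijGroup_def fun_eq_iff)

interpretation Sym_P1: group Sym_P1
  by (rule group_BijGroup)

lemma inv_Sym_P1_comp: "f \<in> carrier Sym_P1 \<Longrightarrow> inv\<^bsub>Sym_P1\<^esub> f \<circ> f = id"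
  by (metis Sym_P1.l_inv Sym_P1.inv_closed mult_Sym_P1 one_Sym_P1)

lemma (in group) commutator_mult_swap:
  assumes "f \<in> carrier G" "g \<in> carrier G"
  shows "f \<otimes> g \<otimes> inv f \<otimes> inv g \<otimes> (g \<otimes> f) = f \<otimes> g"
  using assms by (simp add: m_assoc flip: m_assoc[of "inv g" g f])

definition affine_germs :: "(p1 \<Rightarrow> p1) set" where
  "affine_germs = {f \<in> carrier Sym_P1. \<exists>a b. a > 0 \<and> affine_near_top f a b}"

definition translation_germs :: "real set \<Rightarrow> (p1 \<Rightarrow> p1) set" where
  "translation_germs B = {f \<in> carrier Sym_P1. \<exists>b\<in>B. affine_near_top f 1 b}"

lemma affine_near_top_commutator:
  assumes f: "f \<in> carrier Sym_P1" "affine_near_top f a b" "a > 0"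
    and g: "g \<in> carrier Sym_P1" "affine_near_top g c d" "c > 0"
  shows "affine_near_top (f \<otimes>\<^bsub>Sym_P1\<^esub> g \<otimes>\<^bsub>Sym_P1\<^esub> inv\<^bsub>Sym_P1\<^esub> f \<otimes>\<^bsub>Sym_P1\<^esub> inv\<^bsub>Sym_P1\<^esub> g)
           1 ((a * d + b) - (c * b + d))"
    (is "affine_near_top ?u _ _")
proof -
  have "?u \<circ> (g \<circ> f) = f \<circ> g"
    using Sym_P1.commutator_mult_swap[OF f(1) g(1)] f(1) g(1)
    by (metis mult_Sym_P1 Sym_P1.m_closed Sym_P1.inv_closed)
  moreover have "affine_near_top (g \<circ> f) (c * a) (c * b + d)"
    using affine_near_top_comp[OF g(2) f(2,3)] .
  moreover have "affine_near_top (f \<circ> g) (c * a) (a * d + b)"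
    using affine_near_top_comp[OF f(2) g(2,3)] by (simp add: mult.commute)
  ultimately have "affine_near_top ?u (c * a / (c * a)) ((a * d + b) - c * a * (c * b + d) / (c * a))"
    using f(3) g(3) by (intro affine_near_top_cancel) auto
  then show ?thesis
    using f(3) g(3) by simp
qed

lemma subgroup_translation_germs:
  assumes "0 \<in> B" "\<And>x y. x \<in> B \<Longrightarrow> y \<in> B \<Longrightarrow> x + y \<in> B" "\<And>x. x \<in> B \<Longrightarrow> - x \<in> B"
  shows "subgroup (translation_germs B) Sym_P1"
proof (rule Sym_P1.subgroupI)
  show "translation_germs B \<subseteq> carrier Sym_P1"
    by (auto simp: translation_germs_def)
  show "translation_germs B \<noteq> {}"
    using affine_near_top_id \<open>0 \<in> B\<close> Sym_P1.one_closed
    unfolding translation_germs_def one_Sym_P1 by blast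
next
  fix f assume "f \<in> translation_germs B"
  then obtain b where f: "f \<in> carrier Sym_P1" "b \<in> B" "affine_near_top f 1 b"
    by (auto simp: translation_germs_def)
  have "affine_near_top (inv\<^bsub>Sym_P1\<^esub> f) (1 / 1) (0 - 1 * b / 1)"
    using inv_Sym_P1_comp[OF f(1)] f(3) affine_near_top_id by (rule affine_near_top_cancel) simp
  then show "inv\<^bsub>Sym_P1\<^esub> f \<in> translation_germs B"
    using f assms(3) by (auto simp: translation_germs_def)
next
  fix f g assume "f \<in> translation_germs B" "g \<in> translation_germs B"
  then obtain b d where "f \<in> carrier Sym_P1" "b \<in> B" "affine_near_top f 1 b"
    "g \<in> carrier Sym_P1" "d \<in> B" "affine_near_top g 1 d"
    by (auto simp: translation_germs_def)
  with affine_near_top_comp[of f 1 b g 1 d] assms(2)[of d b]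
  show "f \<otimes>\<^bsub>Sym_P1\<^esub> g \<in> translation_germs B"
    by (auto simp: translation_germs_def mult_Sym_P1 carrier_Sym_P1 bij_comp add.commute)
qed

lemma derived_set_affine_germs: "derived_set Sym_P1 affine_germs \<subseteq> translation_germs UNIV"
  using affine_near_top_commutator by (fastforce simp: affine_germs_def translation_germs_def)

lemma derived_set_translation_germs:
  "derived_set Sym_P1 (translation_germs UNIV) \<subseteq> translation_germs {0}"
  using affine_near_top_commutator[where a = 1 and c = 1]
  by (fastforce simp: translation_germs_def)

lemma second_derived_subset_translation_germs:
  assumes "X \<subseteq> affine_germs"
  shows "derived Sym_P1 (derived Sym_P1 X) \<subseteq> translation_germs {0}"
proof -
  have "derived Sym_P1 X \<subseteq> translation_germs UNIV"
    unfolding derived_def using derived_set_affine_germs assms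
    by (intro Sym_P1.generate_subgroup_incl subgroup_translation_germs) auto
  then show ?thesis
    unfolding derived_def[of _ "derived Sym_P1 X"] using derived_set_translation_germs
    by (intro Sym_P1.generate_subgroup_incl subgroup_translation_germs) auto
qed

section \<open>Germs of elements of \<open>H(A)\<close>\<close>

text \<open>A piece near \<open>+\<infinity>\<close> of a map fixing \<open>\<infinity>\<close> cannot have \<open>c \<noteq> 0\<close>: it would
  tend to the finite value \<open>a/c\<close>.\<close>
lemma mobius_near_top_affine:
  assumes far: "\<And>K. \<forall>\<^sub>F t in at_top. \<forall>s. g (Some t) = Some s \<longrightarrow> K < \<bar>s\<bar>"
    and det: "a * d - b * c = 1"
    and piece: "\<forall>\<^sub>F t in at_top. g (Some t) = mobius (a, b, c, d) (Some t)"
  shows "a \<noteq> 0" "affine_near_top g (a * a) (a * b)"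
proof -
  have "c = 0"
  proof (rule ccontr)
    assume "c \<noteq> 0"
    then have "((\<lambda>t. (a * t + b) / (c * t + d)) \<longlongrightarrow> a / c) at_top"
      by (real_asymp simp: divide_inverse)
    then have "\<forall>\<^sub>F t in at_top. \<bar>(a * t + b) / (c * t + d)\<bar> < \<bar>a / c\<bar> + 1"
      by (rule order_tendstoD(2)[OF tendsto_rabs]) simp
    moreover have "\<forall>\<^sub>F t in at_top. c * t + d \<noteq> 0"
      using eventually_gt_at_top[of "- d / c"]
      by eventually_elim (metis \<open>c \<noteq> 0\<close> less_irrefl minus_divide_left add_eq_0_iff2
          nonzero_mult_div_cancel_left mult.commute)
    ultimately have "\<forall>\<^sub>F t::real in at_top. False"
      using piece far[of "\<bar>a / c\<bar> + 1"] by eventually_elim auto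
    then show False by simp
  qed
  then have "a * d = 1" using det by simp
  then show "a \<noteq> 0" by auto
  have "(a * t + b) / d = a * a * t + a * b" for t
  proof -
    have "(a * a * t + a * b) * d = (a * t + b) * (a * d)" by (simp add: algebra_simps)
    with \<open>a * d = 1\<close> show ?thesis by (auto simp: divide_eq_eq)
  qed
  with piece \<open>c = 0\<close> \<open>a * d = 1\<close> show "affine_near_top g (a * a) (a * b)"
    unfolding affine_near_top_def by (auto elim!: eventually_mono)
qed

lemma G_A_eventually_mobius:
  assumes "g \<in> G_A A"
  shows "\<exists>M\<in>SL2 A. \<forall>\<^sub>F t in at_top. g (Some t) = mobius M (Some t)"
proof -
  obtain B where B: "finite B"
    "\<forall>C \<in> connected_components_of (subtopology P1_top (UNIV - B)). \<exists>M \<in> SL2 A. \<forall>p\<in>C. g p = mobius M p"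
    using assms by (auto simp: G_A_def)
  obtain R where R: "\<forall>t\<in>Some -` B. norm t \<le> R"
    using finite_imp_bounded[OF finite_vimageI[OF B(1)]] bounded_iff by (metis inj_Some)
  have "connectedin P1_top (Some ` {R<..})"
    by (rule connectedin_continuous_map_image[OF continuous_map_Some]) simp
  moreover have "Some ` {R<..} \<subseteq> UNIV - B"
    using R by force
  ultimately have "connectedin (subtopology P1_top (UNIV - B)) (Some ` {R<..})"
    by (simp add: connectedin_subtopology)
  moreover have "Some (R + 1) \<in> topspace (subtopology P1_top (UNIV - B))"
    using \<open>Some ` {R<..} \<subseteq> UNIV - B\<close> by (force simp: topspace_P1_top)
  ultimately obtain C where "C \<in> connected_components_of (subtopology P1_top (UNIV - B))"
    "Some ` {R<..} \<subseteq> C"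
    by (metis exists_connected_component_of_superset empty_iff null_topspace_iff_trivial)
  then obtain M where "M \<in> SL2 A" "\<forall>t>R. g (Some t) = mobius M (Some t)"
    using B(2) by fastforce
  then show ?thesis
    using eventually_gt_at_top[of R] by (blast intro: eventually_mono)
qed

lemma H_A_subset_affine_germs: "H_A A \<subseteq> affine_germs"
proof
  fix g assume "g \<in> H_A A"
  then have hom: "homeomorphic_map P1_top P1_top g" and "g None = None" and "g \<in> G_A A"
    by (auto simp: H_A_def G_A_def)
  obtain a b c d where "(a, b, c, d) \<in> SL2 A"
    and piece: "\<forall>\<^sub>F t in at_top. g (Some t) = mobius (a, b, c, d) (Some t)"
    using G_A_eventually_mobius[OF \<open>g \<in> G_A A\<close>] by (metis prod_cases4)
  then have "a * d - b * c = 1" by (simp add: SL2_def)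
  moreover have "\<forall>\<^sub>F t in at_top. \<forall>s. g (Some t) = Some s \<longrightarrow> K < \<bar>s\<bar>" for K
    using continuous_map_P1_top_at_infinity[OF homeomorphic_imp_continuous_map[OF hom]
        \<open>g None = None\<close>] .
  ultimately have "a \<noteq> 0" "affine_near_top g (a * a) (a * b)"
    using mobius_near_top_affine[OF _ _ piece] by blast+
  then have "a * a > 0" by (auto simp: zero_less_mult_iff linorder_neq_iff)
  with \<open>affine_near_top g (a * a) (a * b)\<close> have "\<exists>\<alpha> \<beta>. \<alpha> > 0 \<and> affine_near_top g \<alpha> \<beta>"
    by blast
  moreover have "bij g"
    using homeomorphic_imp_injective_map[OF hom] homeomorphic_imp_surjective_map[OF hom]
    by (simp add: topspace_P1_top bij_def)
  ultimately show "g \<in> affine_germs"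
    by (simp add: affine_germs_def carrier_Sym_P1)
qed

section \<open>A bump element of \<open>H(A)\<close>\<close>

lemma is_subring_zero: "is_subring A \<Longrightarrow> 0 \<in> A"
  unfolding is_subring_def by (metis diff_self)

lemma is_subring_add: "is_subring A \<Longrightarrow> x \<in> A \<Longrightarrow> y \<in> A \<Longrightarrow> x + y \<in> A"
  unfolding is_subring_def by (metis diff_diff_eq2 diff_self diff_zero)

lemma is_subring_of_nat:
  assumes "is_subring A" shows "of_nat n \<in> A"
proof (induction n)
  case 0
  show ?case using is_subring_zero[OF assms] by simp
next
  case (Suc n)
  then show ?case using assms is_subring_add[of A 1 "of_nat n"] by (simp add: is_subring_def)
qed

definition golden :: real where "golden = (1 + sqrt 5) / 2"

definition golden_conj :: real where "golden_conj = (1 - sqrt 5) / 2"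

lemma golden_facts:
  "-1 < golden_conj" "golden_conj < 0" "1 < golden" "golden < 2"
  "golden_conj * golden_conj = golden_conj + 1" "golden * golden = golden + 1"
proof -
  have "2 < sqrt (5::real)" by (rule real_less_rsqrt) simp
  moreover have "sqrt (5::real) < 3" by (rule real_less_lsqrt) auto
  ultimately show "-1 < golden_conj" "golden_conj < 0" "1 < golden" "golden < 2"
    "golden_conj * golden_conj = golden_conj + 1" "golden * golden = golden + 1"
    unfolding golden_def golden_conj_def by (auto simp: field_simps)
qed

definition cat_map :: "real \<Rightarrow> real" where "cat_map u = (2 * u + 1) / (u + 1)"

definition cat_map_inv :: "real \<Rightarrow> real" where "cat_map_inv v = (v - 1) / (2 - v)"

lemma cat_map_fixes: "cat_map golden_conj = golden_conj" "cat_map golden = golden"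
  using golden_facts by (simp_all add: cat_map_def field_simps)

lemma cat_map_inv_fixes: "cat_map_inv golden_conj = golden_conj" "cat_map_inv golden = golden"
  using golden_facts by (simp_all add: cat_map_inv_def field_simps)

lemma cat_map_maps_to:
  assumes "golden_conj \<le> u" "u \<le> golden"
  shows "golden_conj \<le> cat_map u" "cat_map u \<le> golden"
proof -
  have pos: "u + 1 > 0" using assms golden_facts by linarith
  have "cat_map u - golden_conj = (2 - golden_conj) * (u - golden_conj) / (u + 1)"
    using pos golden_facts(5) by (simp add: cat_map_def field_simps)
  moreover have "cat_map u - golden = - ((2 - golden) * (golden - u) / (u + 1))"
    using pos golden_facts(6) by (simp add: cat_map_def field_simps)
  moreover have "(2 - golden_conj) * (u - golden_conj) / (u + 1) \<ge> 0"
    "(2 - golden) * (golden - u) / (u + 1) \<ge> 0"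
    using pos assms golden_facts by simp_all
  ultimately show "golden_conj \<le> cat_map u" "cat_map u \<le> golden" by linarith+
qed

lemma cat_map_inv_maps_to:
  assumes "golden_conj \<le> v" "v \<le> golden"
  shows "golden_conj \<le> cat_map_inv v" "cat_map_inv v \<le> golden"
proof -
  have pos: "2 - v > 0" using assms golden_facts by linarith
  have "cat_map_inv v - golden_conj = (1 + golden_conj) * (v - golden_conj) / (2 - v)"
    using pos golden_facts(5) by (simp add: cat_map_inv_def field_simps)
  moreover have "cat_map_inv v - golden = - ((1 + golden) * (golden - v) / (2 - v))"
    using pos golden_facts(6) by (simp add: cat_map_inv_def field_simps)
  moreover have "(1 + golden_conj) * (v - golden_conj) / (2 - v) \<ge> 0"
    "(1 + golden) * (golden - v) / (2 - v) \<ge> 0"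
    using pos assms golden_facts by simp_all
  ultimately show "golden_conj \<le> cat_map_inv v" "cat_map_inv v \<le> golden" by linarith+
qed

lemma cat_map_inv_cat_map: "u + 1 \<noteq> 0 \<Longrightarrow> cat_map_inv (cat_map u) = u"
  by (simp add: cat_map_def cat_map_inv_def field_simps)

lemma cat_map_cat_map_inv: "v \<noteq> 2 \<Longrightarrow> cat_map (cat_map_inv v) = v"
  by (simp add: cat_map_def cat_map_inv_def field_simps)

text \<open>The matrix \<open>(2 1; 1 1)\<close> of \<open>cat_map\<close>, conjugated by the translation by \<open>k\<close>.\<close>
definition cat_matrix :: "real \<Rightarrow> mat2" where
  "cat_matrix k = (2 + k, 1 - k - k * k, 1, 1 - k)"

lemma mobius_cat_matrix:
  "t - k + 1 \<noteq> 0 \<Longrightarrow> mobius (cat_matrix k) (Some t) = Some (k + cat_map (t - k))"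
  by (simp add: cat_matrix_def cat_map_def field_simps)

lemma cat_matrix_SL2:
  assumes A: "is_subring A" and "k \<in> A"
  shows "cat_matrix k \<in> SL2 A"
proof -
  have one: "1 \<in> A" and diff: "\<And>x y. x \<in> A \<Longrightarrow> y \<in> A \<Longrightarrow> x - y \<in> A"
    and mult: "\<And>x y. x \<in> A \<Longrightarrow> y \<in> A \<Longrightarrow> x * y \<in> A"
    using A by (auto simp: is_subring_def)
  have "2 + k \<in> A" using is_subring_add[OF A one is_subring_add[OF A one \<open>k \<in> A\<close>]] by simp
  moreover have "1 - k - k * k \<in> A" "1 - k \<in> A"
    using one diff mult \<open>k \<in> A\<close> by blast+
  ultimately show ?thesis
    using one by (simp add: cat_matrix_def SL2_def algebra_simps)
qed

lemma P_set_cat_fixes: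
  assumes "is_subring A" "k \<in> A"
  shows "Some (k + golden_conj) \<in> P_set A" "Some (k + golden) \<in> P_set A"
proof -
  have "hyperbolic (cat_matrix k)"
    by (simp add: cat_matrix_def hyperbolic_def)
  moreover have "mobius (cat_matrix k) (Some (k + golden_conj)) = Some (k + golden_conj)"
    "mobius (cat_matrix k) (Some (k + golden)) = Some (k + golden)"
    using mobius_cat_matrix cat_map_fixes golden_facts by auto
  ultimately show "Some (k + golden_conj) \<in> P_set A" "Some (k + golden) \<in> P_set A"
    unfolding P_set_def using cat_matrix_SL2[OF assms] by blast+
qed

definition extend_id :: "real \<Rightarrow> real \<Rightarrow> (real \<Rightarrow> real) \<Rightarrow> real \<Rightarrow> real" where
  "extend_id p q \<phi> u = \<phi> (max p (min q u)) + u - max p (min q u)"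

lemma extend_id_eq:
  assumes "p \<le> q" "\<phi> p = p" "\<phi> q = q"
  shows "extend_id p q \<phi> u = (if p \<le> u \<and> u \<le> q then \<phi> u else u)"
  using assms by (auto simp: extend_id_def max_def min_def)

lemma continuous_on_extend_id:
  assumes "p \<le> q" "continuous_on {p..q} \<phi>"
  shows "continuous_on UNIV (extend_id p q \<phi>)"
proof -
  have clamp: "continuous_on UNIV (\<lambda>u. max p (min q u))"
    by (intro continuous_intros)
  moreover have "(\<lambda>u. max p (min q u)) ` UNIV \<subseteq> {p..q}"
    using assms(1) by auto
  ultimately have "continuous_on UNIV (\<lambda>u. \<phi> (max p (min q u)))"
    using continuous_on_compose2[OF assms(2)] by blast
  with clamp show ?thesis
    unfolding extend_id_def by (intro continuous_intros)
qed

definition bump :: "real \<Rightarrow> p1 \<Rightarrow> p1" where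
  "bump k = map_option (extend_id (k + golden_conj) (k + golden) (\<lambda>t. k + cat_map (t - k)))"

lemma bump_None [simp]: "bump k None = None"
  by (simp add: bump_def)

lemma bump_Some:
  "bump k (Some t) =
     Some (if k + golden_conj \<le> t \<and> t \<le> k + golden then k + cat_map (t - k) else t)"
  using golden_facts cat_map_fixes by (simp add: bump_def extend_id_eq)

lemma homeomorphic_map_bump: "homeomorphic_map P1_top P1_top (bump k)"
proof -
  let ?p = "k + golden_conj" and ?q = "k + golden"
  let ?F = "extend_id ?p ?q (\<lambda>t. k + cat_map (t - k))"
  let ?G = "extend_id ?p ?q (\<lambda>t. k + cat_map_inv (t - k))"
  have pq: "?p \<le> ?q" using golden_facts by simp
  have F: "?F t = (if ?p \<le> t \<and> t \<le> ?q then k + cat_map (t - k) else t)" for t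
    using golden_facts cat_map_fixes by (simp add: extend_id_eq)
  have G: "?G t = (if ?p \<le> t \<and> t \<le> ?q then k + cat_map_inv (t - k) else t)" for t
    using golden_facts cat_map_inv_fixes by (simp add: extend_id_eq)
  have "continuous_on {?p..?q} (\<lambda>t. k + cat_map (t - k))"
    "continuous_on {?p..?q} (\<lambda>t. k + cat_map_inv (t - k))"
    unfolding cat_map_def cat_map_inv_def using golden_facts
    by (intro continuous_intros; force)+
  then have cont: "continuous_on UNIV ?F" "continuous_on UNIV ?G"
    using pq by (simp_all add: continuous_on_extend_id)
  have out: "?F t = t" "?G t = t" if "\<bar>k\<bar> + 2 < \<bar>t\<bar>" for t
    using that golden_facts by (auto simp: F G)
  have inv: "?G (?F t) = t" "?F (?G t) = t" for t
    using cat_map_maps_to[of "t - k"] cat_map_inv_maps_to[of "t - k"] golden_facts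
    by (auto simp: F G cat_map_inv_cat_map cat_map_cat_map_inv)
  show ?thesis
    unfolding bump_def by (rule homeomorphic_map_map_option[OF cont(1) out(1) cont(2) out(2) inv])
qed

lemma bump_in_H_A:
  assumes A: "is_subring A" and "k \<in> A"
  shows "bump k \<in> H_A A"
proof -
  let ?p = "k + golden_conj" and ?q = "k + golden"
  have "\<exists>M \<in> SL2 A. \<forall>x\<in>C. bump k x = mobius M x"
    if "C \<in> connected_components_of (subtopology P1_top (UNIV - {Some ?p, Some ?q}))" for C
  proof -
    have "connectedin P1_top C" "Some ?p \<notin> C" "Some ?q \<notin> C"
      using connectedin_connected_components_of[OF that]
      by (auto simp: connectedin_subtopology)
    then consider "C \<subseteq> Some ` {?p<..<?q}" | "C \<inter> Some ` {?p<..<?q} = {}"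
      using connectedin_P1_top_avoiding by blast
    then show ?thesis
    proof cases
      case 1
      have "bump k x = mobius (cat_matrix k) x" if "x \<in> C" for x
        using 1 that golden_facts by (auto simp: bump_Some mobius_cat_matrix)
      then show ?thesis using cat_matrix_SL2[OF assms] by blast
    next
      case 2
      have "(1, 0, 0, 1) \<in> SL2 A"
        using A is_subring_zero by (auto simp: SL2_def is_subring_def)
      moreover have "bump k x = mobius (1, 0, 0, 1) x" if "x \<in> C" for x
      proof (cases x)
        case (Some t)
        with 2 that \<open>Some ?p \<notin> C\<close> \<open>Some ?q \<notin> C\<close>
        have "t \<noteq> ?p" "t \<noteq> ?q" "t \<notin> {?p<..<?q}" by auto
        then show ?thesis by (auto simp: Some bump_Some)
      qed simp
      ultimately show ?thesis by blast
    qed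
  qed
  moreover have "{Some ?p, Some ?q} \<subseteq> P_set A"
    using P_set_cat_fixes[OF assms] by simp
  ultimately show ?thesis
    unfolding H_A_def G_A_def using homeomorphic_map_bump
    by (auto intro!: exI[of _ "{Some ?p, Some ?q}"])
qed

lemma bump_ne_id: "bump k \<noteq> id"
proof -
  have "bump k (Some (k + 1 / 2)) = Some (k + 4 / 3)"
    using golden_facts by (simp add: bump_Some cat_map_def)
  then show ?thesis by auto
qed

lemma bump_support:
  "bump k ` Some ` {k + golden_conj..k + golden} \<subseteq> Some ` {k + golden_conj..k + golden}"
  "x \<notin> Some ` {k + golden_conj..k + golden} \<Longrightarrow> bump k x = x"
proof -
  have "bump k (Some t) \<in> Some ` {k + golden_conj..k + golden}"
    if "t \<in> {k + golden_conj..k + golden}" for t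
    using that cat_map_maps_to[of "t - k"] by (simp add: bump_Some)
  then show "bump k ` Some ` {k + golden_conj..k + golden} \<subseteq> Some ` {k + golden_conj..k + golden}"
    by blast
  show "bump k x = x" if "x \<notin> Some ` {k + golden_conj..k + golden}"
    using that by (cases x) (auto simp: bump_Some)
qed

lemma comp_commute_if_support_fixed:
  assumes "inj s" "\<And>x. x \<in> R \<Longrightarrow> s x = x" "h ` R \<subseteq> R" "\<And>x. x \<notin> R \<Longrightarrow> h x = x"
  shows "h \<circ> s = s \<circ> h"
proof
  fix x
  have "s x \<notin> R" if "x \<notin> R"
    using that assms(1,2) by (metis injD)
  then show "(h \<circ> s) x = (s \<circ> h) x"
    using assms(2-4) by (cases "x \<in> R") auto
qed

theorem proposition7:
  fixes A :: "real set" and S :: "(p1 \<Rightarrow> p1) set"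
  assumes "is_subring A"
    and "finite S"
    and "S \<subseteq> H_A_dd A"
  shows "\<exists>h \<in> H_A A. h \<noteq> id \<and> (\<forall>s \<in> S. h \<circ> s = s \<circ> h)"
proof -
  have S: "S \<subseteq> translation_germs {0}"
    using assms(3) second_derived_subset_translation_germs[OF H_A_subset_affine_germs]
    unfolding H_A_dd_def by blast
  then have "\<forall>\<^sub>F t in at_top. \<forall>s\<in>S. s (Some t) = Some t"
    using assms(2) by (intro eventually_ball_finite) (auto simp: translation_germs_def affine_near_top_def)
  then obtain M where M: "\<And>t s. t \<ge> M \<Longrightarrow> s \<in> S \<Longrightarrow> s (Some t) = Some t"
    by (auto simp: eventually_at_top_linorder)
  obtain n :: nat where n: "M + 1 < n"
    using reals_Archimedean2 by blast
  let ?R = "Some ` {n + golden_conj..n + golden}"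
  have "s x = x" if "s \<in> S" "x \<in> ?R" for s x
  proof -
    from \<open>x \<in> ?R\<close> obtain t where "x = Some t" "n + golden_conj \<le> t" by auto
    moreover have "t \<ge> M" using calculation(2) n golden_facts(1) by linarith
    ultimately show ?thesis using M \<open>s \<in> S\<close> by simp
  qed
  moreover have "inj s" if "s \<in> S" for s
    using that S by (auto simp: translation_germs_def carrier_Sym_P1 bij_is_inj)
  ultimately have "bump n \<circ> s = s \<circ> bump n" if "s \<in> S" for s
    using that by (intro comp_commute_if_support_fixed[OF _ _ bump_support]) auto
  then show ?thesis
    using bump_in_H_A[OF assms(1) is_subring_of_nat[OF assms(1)]] bump_ne_id by blast
qed

end
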